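(* For every $[\mu]\in\mathbb PV_n$ one has $F_n([\mu])\ge\frac4n$, so $\frac4n$ is the minimum value of $F_n:\mathbb PV_n\to\mathbb R$. Moreover, $F_n([\mu])=\frac4n$ if and only if $[\mu]$ is a critical point of $F_n$ of type $(0;n)$, i.e. if and only if $\mathrm M_\mu$ is a real multiple of the identity.
   Context: $V_n$ is the space of bilinear maps $\mu:\mathbb C^n\times\mathbb C^n\to\mathbb C^n$ with standard Hermitian structures. $L^\mu_XY=\mu(X,Y)$, $R^\mu_XY=\mu(Y,X)$, $\mathrm M_\mu=2\sum_i L^\mu_{X_i}(L^\mu_{X_i})^*-2\sum_i (L^\mu_{X_i})^*L^\mu_{X_i}-2\sum_i (R^\mu_{X_i})^*R^\mu_{X_i}$ ($\{X_i\}$ orthonormal), $\|\mu\|^2=\sum_{i,j}\|\mu(X_i,X_j)\|^2$, $F_n([\mu])=\operatorname{tr}\mathrm M_\mu^2/\|\mu\|^4$. $[\mu]$ is a critical point of $F_n$ iff $\mathrm M_\mu=c_\mu I+D_\mu$ with $c_\mu\in\mathbb R$, $D_\mu$ a derivation of $\mu$; it is of type $(0;n)$ when moreover $D_\mu=0$. *)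

theory Defs
  imports "HOL-Analysis.Analysis"
begin

text \<open>A bilinear map mu on C^n, with n = CARD('n), is encoded by its structure
constants with respect to the standard (orthonormal) basis e_i:
  mu(e_i, e_j) = sum_k (mu i j k) e_k.
Bilinear maps correspond bijectively to such families.\<close>

type_synonym 'n bilin = "'n \<Rightarrow> 'n \<Rightarrow> 'n \<Rightarrow> complex"

text \<open>Matrix of L_{e_i} (left multiplication): column j is mu(e_i,e_j).\<close>
definition Lmat :: "'n::finite bilin \<Rightarrow> 'n \<Rightarrow> complex^'n^'n" where
  "Lmat mu i = (\<chi> k j. mu i j k)"

text \<open>Matrix of R_{e_i} (right multiplication): column j is mu(e_j,e_i).\<close>
definition Rmat :: "'n::finite bilin \<Rightarrow> 'n \<Rightarrow> complex^'n^'n" where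
  "Rmat mu i = (\<chi> k j. mu j i k)"

definition cadj :: "complex^'n^'m \<Rightarrow> complex^'m^'n" where
  "cadj A = (\<chi> i j. cnj (A $ j $ i))"

definition Mmu :: "'n::finite bilin \<Rightarrow> complex^'n^'n" where
  "Mmu mu = (2::real) *\<^sub>R (\<Sum>i\<in>UNIV. Lmat mu i ** cadj (Lmat mu i))
          - (2::real) *\<^sub>R (\<Sum>i\<in>UNIV. cadj (Lmat mu i) ** Lmat mu i)
          - (2::real) *\<^sub>R (\<Sum>i\<in>UNIV. cadj (Rmat mu i) ** Rmat mu i)"

definition normsq :: "'n::finite bilin \<Rightarrow> real" where
  "normsq mu = (\<Sum>i\<in>UNIV. \<Sum>j\<in>UNIV. \<Sum>k\<in>UNIV. (cmod (mu i j k))\<^sup>2)"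

text \<open>F_n([mu]) = tr(M_mu^2)/||mu||^4; tr(M_mu^2) is real since M_mu is Hermitian.\<close>
definition Fn :: "'n::finite bilin \<Rightarrow> real" where
  "Fn mu = Re (trace (Mmu mu ** Mmu mu)) / (normsq mu)\<^sup>2"

end

theory Submission
  imports Defs
begin

text \<open>\<open>M\<^sub>\<mu>\<close> is Hermitian with trace \<open>-2\<parallel>\<mu>\<parallel>\<^sup>2\<close>: the traces of the two
\<open>L\<close>-terms cancel, and \<open>\<Sum>\<^sub>i tr (R\<^sub>i\<^sup>* R\<^sub>i) = \<parallel>\<mu>\<parallel>\<^sup>2\<close>. Hence
\<open>F\<^sub>n = 4 tr M\<^sup>2 / (tr M)\<^sup>2\<close>. For a Hermitian \<open>M\<close>, \<open>tr M\<^sup>2\<close> is the sum of the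
squares of the real diagonal plus the squared moduli of the off-diagonal entries, so
Cauchy-Schwarz on the diagonal gives \<open>(tr M)\<^sup>2 \<le> n tr M\<^sup>2\<close>, with equality iff the
diagonal is constant and the off-diagonal part vanishes, i.e. iff \<open>M\<close> is a real
multiple of \<open>I\<close>. The bound is attained by \<open>\<complex>\<^sup>n\<close> with the coordinatewise product,
for which \<open>M\<^sub>\<mu> = -2 I\<close>.\<close>

lemma sum_squares_eq_square_sum_plus_deviation:
  fixes f :: "'a \<Rightarrow> real"
  assumes "finite A" "A \<noteq> {}"
  defines "m \<equiv> (\<Sum>x\<in>A. f x) / card A"
  shows "(\<Sum>x\<in>A. (f x)\<^sup>2) * card A = (\<Sum>x\<in>A. f x)\<^sup>2 + card A * (\<Sum>x\<in>A. (f x - m)\<^sup>2)"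
proof -
  have card_pos: "real (card A) > 0"
    using assms(1,2) by (simp add: card_gt_0_iff)
  have "(\<Sum>x\<in>A. (f x - m)\<^sup>2) = (\<Sum>x\<in>A. (f x)\<^sup>2) - 2 * m * (\<Sum>x\<in>A. f x) + card A * m\<^sup>2"
    by (simp add: power2_diff sum.distrib sum_subtractf sum_distrib_left sum_distrib_right mult_ac)
  then show ?thesis
    using card_pos by (simp add: m_def field_simps power2_eq_square)
qed

lemma sum_squared_eq_sum_of_squares_iff:
  fixes f :: "'a \<Rightarrow> real"
  assumes "finite A" "A \<noteq> {}"
  shows "(\<Sum>x\<in>A. f x)\<^sup>2 = (\<Sum>x\<in>A. (f x)\<^sup>2) * card A \<longleftrightarrow> (\<exists>c. \<forall>x\<in>A. f x = c)"
proof
  define m where "m = (\<Sum>x\<in>A. f x) / card A"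
  assume "(\<Sum>x\<in>A. f x)\<^sup>2 = (\<Sum>x\<in>A. (f x)\<^sup>2) * card A"
  then have "(\<Sum>x\<in>A. (f x - m)\<^sup>2) = 0"
    using sum_squares_eq_square_sum_plus_deviation[OF assms, of f] assms by (simp add: m_def)
  then have "\<forall>x\<in>A. f x = m"
    using assms(1) by (simp add: sum_nonneg_eq_0_iff)
  then show "\<exists>c. \<forall>x\<in>A. f x = c" ..
next
  assume "\<exists>c. \<forall>x\<in>A. f x = c"
  then obtain c where "\<forall>x\<in>A. f x = c" ..
  then show "(\<Sum>x\<in>A. f x)\<^sup>2 = (\<Sum>x\<in>A. (f x)\<^sup>2) * card A"
    by (simp add: power2_eq_square)
qed

lemma trace_mult_cadj:
  fixes A :: "complex^'n::finite^'m::finite"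
  shows "trace (A ** cadj A) = of_real (\<Sum>i\<in>UNIV. \<Sum>j\<in>UNIV. (cmod (A$i$j))\<^sup>2)"
  by (simp add: trace_def matrix_matrix_mult_def cadj_def of_real_sum
      flip: complex_norm_square del: of_real_power)

lemma hermitian_diag_real:
  fixes M :: "complex^'n::finite^'n"
  assumes "cadj M = M"
  shows "of_real (Re (M$k$k)) = M$k$k"
proof -
  have "cnj (M$k$k) = M$k$k"
    using arg_cong[OF assms, of "\<lambda>A. A$k$k"] by (simp add: cadj_def)
  then show ?thesis
    by (metis Reals_cnj_iff Re_complex_of_real Reals_cases)
qed

lemma Re_trace:
  fixes M :: "complex^'n::finite^'n"
  shows "Re (trace M) = (\<Sum>k\<in>UNIV. Re (M$k$k))"
  by (simp add: trace_def)

lemma hermitian_trace_square: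
  fixes M :: "complex^'n::finite^'n"
  assumes "cadj M = M"
  shows "Re (trace (M ** M)) =
           (\<Sum>k\<in>UNIV. (Re (M$k$k))\<^sup>2) + (\<Sum>k\<in>UNIV. \<Sum>l\<in>UNIV-{k}. (cmod (M$k$l))\<^sup>2)"
proof -
  have "(cmod (M$k$k))\<^sup>2 = (Re (M$k$k))\<^sup>2" for k
    by (metis hermitian_diag_real[OF assms] norm_of_real power2_abs)
  then have "(\<Sum>l\<in>UNIV. (cmod (M$k$l))\<^sup>2) =
              (Re (M$k$k))\<^sup>2 + (\<Sum>l\<in>UNIV-{k}. (cmod (M$k$l))\<^sup>2)" for k
    by (simp add: sum.remove[of UNIV k])
  then show ?thesis
    using trace_mult_cadj[of M] assms by (simp add: sum.distrib)
qed

lemma hermitian_trace_squared_le: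
  fixes M :: "complex^'n::finite^'n"
  assumes "cadj M = M"
  shows "(Re (trace M))\<^sup>2 \<le> CARD('n) * Re (trace (M ** M))"
proof -
  have "(Re (trace M))\<^sup>2 \<le> CARD('n) * (\<Sum>k\<in>UNIV. (Re (M$k$k))\<^sup>2)"
    unfolding Re_trace using sum_squared_le_sum_of_squares[of "\<lambda>k. Re (M$k$k)" UNIV]
    by (simp add: mult.commute)
  also have "\<dots> \<le> CARD('n) * Re (trace (M ** M))"
    unfolding hermitian_trace_square[OF assms] by (simp add: sum_nonneg)
  finally show ?thesis .
qed

lemma hermitian_trace_squared_eq_iff:
  fixes M :: "complex^'n::finite^'n"
  assumes "cadj M = M"
  shows "(Re (trace M))\<^sup>2 = CARD('n) * Re (trace (M ** M)) \<longleftrightarrow>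
           (\<exists>c::real. M = c *\<^sub>R mat 1)"
proof -
  let ?d = "\<lambda>k. Re (M$k$k)"
  define offdiag where "offdiag = (\<Sum>k\<in>UNIV. \<Sum>l\<in>UNIV-{k}. (cmod (M$k$l))\<^sup>2)"
  have offdiag_nonneg: "offdiag \<ge> 0"
    unfolding offdiag_def by (simp add: sum_nonneg)
  have offdiag_eq_0_iff: "offdiag = 0 \<longleftrightarrow> (\<forall>k l. l \<noteq> k \<longrightarrow> M$k$l = 0)"
    unfolding offdiag_def by (auto simp: sum_nonneg_eq_0_iff sum_nonneg)
  have cs: "(\<Sum>k\<in>UNIV. ?d k)\<^sup>2 \<le> (\<Sum>k\<in>UNIV. (?d k)\<^sup>2) * CARD('n)"
    by (rule sum_squared_le_sum_of_squares)
  have trace_square: "Re (trace (M ** M)) = (\<Sum>k\<in>UNIV. (?d k)\<^sup>2) + offdiag"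
    unfolding offdiag_def by (rule hermitian_trace_square[OF assms])
  have "(Re (trace M))\<^sup>2 = CARD('n) * Re (trace (M ** M)) \<longleftrightarrow>
        (\<Sum>k\<in>UNIV. ?d k)\<^sup>2 = (\<Sum>k\<in>UNIV. (?d k)\<^sup>2) * CARD('n) \<and> offdiag = 0"
    unfolding trace_square Re_trace[of M]
    using cs offdiag_nonneg by (auto simp: distrib_left mult.commute mult_le_0_iff)
  also have "\<dots> \<longleftrightarrow> (\<exists>c. \<forall>k. ?d k = c) \<and> (\<forall>k l. l \<noteq> k \<longrightarrow> M$k$l = 0)"
    by (simp add: sum_squared_eq_sum_of_squares_iff offdiag_eq_0_iff)
  also have "\<dots> \<longleftrightarrow> (\<exists>c::real. M = c *\<^sub>R mat 1)"
  proof
    assume "(\<exists>c. \<forall>k. ?d k = c) \<and> (\<forall>k l. l \<noteq> k \<longrightarrow> M$k$l = 0)"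
    then obtain c where "\<forall>k. ?d k = c" "\<forall>k l. l \<noteq> k \<longrightarrow> M$k$l = 0"
      by blast
    then have "M = c *\<^sub>R mat 1"
      using hermitian_diag_real[OF assms] by (auto simp: vec_eq_iff mat_def of_real_def)
    then show "\<exists>c::real. M = c *\<^sub>R mat 1" ..
  qed (auto simp: mat_def)
  finally show ?thesis .
qed

lemma Mmu_entry:
  fixes mu :: "'n::finite bilin"
  shows "Mmu mu $ k $ l =
     2 * (\<Sum>i\<in>UNIV. \<Sum>j\<in>UNIV. mu i j k * cnj (mu i j l))
   - 2 * (\<Sum>i\<in>UNIV. \<Sum>j\<in>UNIV. cnj (mu i k j) * mu i l j)
   - 2 * (\<Sum>i\<in>UNIV. \<Sum>j\<in>UNIV. cnj (mu k i j) * mu l i j)"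
  by (simp add: Mmu_def matrix_matrix_mult_def cadj_def Lmat_def Rmat_def scaleR_conv_of_real)

lemma cadj_Mmu: "cadj (Mmu mu) = Mmu mu"
  by (simp add: vec_eq_iff cadj_def Mmu_entry mult.commute)

lemma trace_Mmu: "Re (trace (Mmu mu)) = - 2 * normsq mu"
proof -
  have "Re (Mmu mu $ k $ k) =
          2 * (\<Sum>i\<in>UNIV. \<Sum>j\<in>UNIV. (cmod (mu i j k))\<^sup>2)
        - 2 * (\<Sum>i\<in>UNIV. \<Sum>j\<in>UNIV. (cmod (mu i k j))\<^sup>2)
        - 2 * (\<Sum>i\<in>UNIV. \<Sum>j\<in>UNIV. (cmod (mu k i j))\<^sup>2)" for k
    by (simp add: Mmu_entry complex_mult_cnj mult.commute[of "cnj _"] cmod_power2)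
  moreover have "(\<Sum>k\<in>UNIV. \<Sum>i\<in>UNIV. \<Sum>j\<in>UNIV. (cmod (mu i j k))\<^sup>2) = normsq mu"
    unfolding normsq_def by (rule trans[OF sum.swap sum.cong[OF refl sum.swap]])
  moreover have "(\<Sum>k\<in>UNIV. \<Sum>i\<in>UNIV. \<Sum>j\<in>UNIV. (cmod (mu i k j))\<^sup>2) = normsq mu"
    unfolding normsq_def by (rule sum.swap)
  ultimately show ?thesis
    by (simp add: Re_trace sum_subtractf normsq_def flip: sum_distrib_left)
qed

lemma normsq_pos:
  assumes "mu \<noteq> (\<lambda>_ _ _. 0)"
  shows "normsq mu > 0"
proof -
  have "normsq mu \<ge> 0"
    unfolding normsq_def by (intro sum_nonneg) auto
  moreover have "normsq mu \<noteq> 0"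
    using assms unfolding normsq_def by (auto simp: sum_nonneg_eq_0_iff sum_nonneg fun_eq_iff)
  ultimately show ?thesis
    by simp
qed

lemma Fn_eq_trace_ratio:
  assumes "mu \<noteq> (\<lambda>_ _ _. 0)"
  shows "Fn mu = 4 * Re (trace (Mmu mu ** Mmu mu)) / (Re (trace (Mmu mu)))\<^sup>2"
  using normsq_pos[OF assms] by (simp add: Fn_def trace_Mmu power_mult_distrib)

lemma trace_Mmu_squared_pos:
  assumes "mu \<noteq> (\<lambda>_ _ _. 0)"
  shows "(Re (trace (Mmu mu)))\<^sup>2 > 0"
  using normsq_pos[OF assms] by (simp add: trace_Mmu)

lemma Fn_ge:
  fixes mu :: "'n::finite bilin"
  assumes "mu \<noteq> (\<lambda>_ _ _. 0)"
  shows "Fn mu \<ge> 4 / CARD('n)"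
  using hermitian_trace_squared_le[OF cadj_Mmu, of mu] trace_Mmu_squared_pos[OF assms]
  by (simp add: Fn_eq_trace_ratio[OF assms] field_simps)

lemma Fn_eq_iff:
  fixes mu :: "'n::finite bilin"
  assumes "mu \<noteq> (\<lambda>_ _ _. 0)"
  shows "Fn mu = 4 / CARD('n) \<longleftrightarrow> (\<exists>c::real. Mmu mu = c *\<^sub>R mat 1)"
  using hermitian_trace_squared_eq_iff[OF cadj_Mmu, of mu] trace_Mmu_squared_pos[OF assms]
  by (auto simp: Fn_eq_trace_ratio[OF assms] field_simps)

definition componentwise_mult :: "'n::finite bilin" where
  "componentwise_mult i j k = of_bool (j = i \<and> k = i)"

lemma componentwise_mult_nonzero: "componentwise_mult \<noteq> (\<lambda>_ _ _. 0)"
  by (auto simp: componentwise_mult_def fun_eq_iff)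

lemma Mmu_componentwise_mult:
  "Mmu (componentwise_mult :: 'n::finite bilin) = (-2::real) *\<^sub>R mat 1"
proof -
  let ?e = "componentwise_mult :: 'n bilin"
  have point_sum:
    "(\<Sum>i\<in>UNIV. \<Sum>j\<in>UNIV. of_bool (i = k \<and> j = k \<and> l = k)) = (of_bool (k = l) :: complex)"
    for k l :: 'n
  proof -
    have "(\<Sum>i\<in>UNIV. \<Sum>j\<in>UNIV. (of_bool (i = k \<and> j = k \<and> l = k) :: complex))
        = (\<Sum>i\<in>UNIV. if i = k then (\<Sum>j\<in>UNIV. if j = k then of_bool (k = l) else 0) else 0)"
      by (intro sum.cong) auto
    then show ?thesis by simp
  qed
  have products: "?e i j k * cnj (?e i j l) = of_bool (i = k \<and> j = k \<and> l = k)"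
       "cnj (?e i k j) * ?e i l j = of_bool (i = k \<and> j = k \<and> l = k)"
       "cnj (?e k i j) * ?e l i j = of_bool (i = k \<and> j = k \<and> l = k)" for i j k l
    by (auto simp: componentwise_mult_def)
  show ?thesis
    unfolding vec_eq_iff Mmu_entry products point_sum by (simp add: mat_def scaleR_2)
qed

theorem lemma4p5:
  fixes dummy :: "'n::finite"
  shows "(\<forall>mu :: 'n bilin. mu \<noteq> (\<lambda>_ _ _. 0) \<longrightarrow>
            Fn mu \<ge> 4 / real CARD('n)
          \<and> (Fn mu = 4 / real CARD('n) \<longleftrightarrow> (\<exists>c::real. Mmu mu = c *\<^sub>R mat 1)))
       \<and> (\<exists>mu :: 'n bilin. mu \<noteq> (\<lambda>_ _ _. 0) \<and> Fn mu = 4 / real CARD('n))"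
proof (intro conjI allI impI)
  fix mu :: "'n bilin"
  assume "mu \<noteq> (\<lambda>_ _ _. 0)"
  then show "Fn mu \<ge> 4 / real CARD('n)"
    and "Fn mu = 4 / real CARD('n) \<longleftrightarrow> (\<exists>c::real. Mmu mu = c *\<^sub>R mat 1)"
    by (rule Fn_ge, rule Fn_eq_iff)
next
  have "Fn (componentwise_mult :: 'n bilin) = 4 / real CARD('n)"
    using Fn_eq_iff[OF componentwise_mult_nonzero] Mmu_componentwise_mult by blast
  then show "\<exists>mu :: 'n bilin. mu \<noteq> (\<lambda>_ _ _. 0) \<and> Fn mu = 4 / real CARD('n)"
    using componentwise_mult_nonzero by blast
qed

end
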